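(* Let $n\ge2$ (prime or composite), $d\ge1$, $\alpha>1$, positive weights $\boldsymbol\gamma=\{\gamma_u\}$ with $\gamma_\emptyset=1$, $M>0$, and $\mathbf z\in\mathbb Z^d$. Then $$\Sigma_T\le M\,|\mathcal A_d(M)|\,S_{n,d,\alpha,\boldsymbol\gamma}(\mathbf z).$$ Moreover, if $\alpha>2$ then $$\Sigma_T\le M\,\big[S_{n,d,\alpha/2,\sqrt{\boldsymbol\gamma}}(\mathbf z)\big]^2.$$
   Context: Weights $\gamma_u>0$ for finite $u\subset\mathbb N$, $\gamma_\emptyset=1$; $\sqrt{\boldsymbol\gamma}$ denotes the weights $\{\gamma_u^{1/2}\}$. For smoothness $a>0$ and weights $\boldsymbol\beta$, and $\mathbf h\in\mathbb Z^d$: $\mathrm{supp}(\mathbf h)=\{j:h_j\ne0\}$, $r_{d,a,\boldsymbol\beta}(\mathbf h)=\beta_{\mathrm{supp}(\mathbf h)}^{-1}\prod_{j\in\mathrm{supp}(\mathbf h)}|h_j|^a$; write $r=r_{d,\alpha,\boldsymbol\gamma}$. $\mathcal A_d(M)=\{\mathbf h\in\mathbb Z^d:r(\mathbf h)\le M\}$. $$S_{n,d,a,\boldsymbol\beta}(\mathbf z)=\sum_{\mathbf h\in\mathbb Z^d}\frac1{r_{d,a,\boldsymbol\beta}(\mathbf h)}\sum_{\substack{\boldsymbol\ell\in\mathbb Z^d\setminus\{\mathbf0\}\\ \boldsymbol\ell\cdot\mathbf z\equiv0\ (\mathrm{mod}\ n)}}\frac1{r_{d,a,\boldsymbol\beta}(\mathbf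 h+\boldsymbol\ell)},$$ $$\Sigma_T:=\sum_{\mathbf h\in\mathcal A_d(M)}\sum_{\substack{\mathbf p\in\mathcal A_d(M)\\(\mathbf p-\mathbf h)\cdot\mathbf z\equiv0\ (\mathrm{mod}\ n)}}\sum_{\substack{\boldsymbol\ell\in\mathbb Z^d\setminus\{\mathbf0,\mathbf p-\mathbf h\}\\ \boldsymbol\ell\cdot\mathbf z\equiv0\ (\mathrm{mod}\ n)}}\frac1{r(\mathbf h+\boldsymbol\ell)}.$$ *)

theory Defs
  imports "HOL-Analysis.Analysis" "HOL-Number_Theory.Cong"
begin

definition Zd :: "nat \<Rightarrow> (nat \<Rightarrow> int) set" where
  "Zd d = {h. \<forall>j\<ge>d. h j = 0}"

definition supp :: "(nat \<Rightarrow> int) \<Rightarrow> nat set" where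
  "supp h = {j. h j \<noteq> 0}"

definition rr :: "real \<Rightarrow> (nat set \<Rightarrow> real) \<Rightarrow> (nat \<Rightarrow> int) \<Rightarrow> real" where
  "rr a \<beta> h = (\<Prod>j\<in>supp h. \<bar>real_of_int (h j)\<bar> powr a) / \<beta> (supp h)"

definition dotp :: "nat \<Rightarrow> (nat \<Rightarrow> int) \<Rightarrow> (nat \<Rightarrow> int) \<Rightarrow> int" where
  "dotp d l z = (\<Sum>j<d. l j * z j)"

definition vadd :: "(nat \<Rightarrow> int) \<Rightarrow> (nat \<Rightarrow> int) \<Rightarrow> (nat \<Rightarrow> int)" where
  "vadd h l = (\<lambda>j. h j + l j)"

definition vsub :: "(nat \<Rightarrow> int) \<Rightarrow> (nat \<Rightarrow> int) \<Rightarrow> (nat \<Rightarrow> int)" where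
  "vsub h l = (\<lambda>j. h j - l j)"

definition vzero :: "nat \<Rightarrow> int" where
  "vzero = (\<lambda>j. 0)"

definition dual_lattice :: "nat \<Rightarrow> nat \<Rightarrow> (nat \<Rightarrow> int) \<Rightarrow> (nat \<Rightarrow> int) set" where
  "dual_lattice n d z = {l \<in> Zd d. [dotp d l z = 0] (mod int n)}"

text \<open>S_{n,d,a,beta}(z); all terms are nonnegative, sums taken in ennreal.\<close>
definition Ssum :: "nat \<Rightarrow> nat \<Rightarrow> real \<Rightarrow> (nat set \<Rightarrow> real) \<Rightarrow> (nat \<Rightarrow> int) \<Rightarrow> ennreal" where
  "Ssum n d a \<beta> z = (\<Sum>\<^sub>\<infinity>h\<in>Zd d. ennreal (1 / rr a \<beta> h) *
      (\<Sum>\<^sub>\<infinity>l\<in>dual_lattice n d z - {vzero}. ennreal (1 / rr a \<beta> (vadd h l))))"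

definition Ad :: "nat \<Rightarrow> real \<Rightarrow> (nat set \<Rightarrow> real) \<Rightarrow> real \<Rightarrow> (nat \<Rightarrow> int) set" where
  "Ad d \<alpha> \<gamma> M = {h \<in> Zd d. rr \<alpha> \<gamma> h \<le> M}"

definition SigmaT :: "nat \<Rightarrow> nat \<Rightarrow> real \<Rightarrow> (nat set \<Rightarrow> real) \<Rightarrow> real \<Rightarrow> (nat \<Rightarrow> int) \<Rightarrow> ennreal" where
  "SigmaT n d \<alpha> \<gamma> M z =
     (\<Sum>h\<in>Ad d \<alpha> \<gamma> M. \<Sum>p\<in>{p \<in> Ad d \<alpha> \<gamma> M. [dotp d (vsub p h) z = 0] (mod int n)}.
        \<Sum>\<^sub>\<infinity>l\<in>dual_lattice n d z - {vzero, vsub p h}. ennreal (1 / rr \<alpha> \<gamma> (vadd h l)))"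

end

(* For the first bound, 1 <= M / r(h) and there are at most |A_d(M)| choices of p.
   For the second, write 1/r = (1/sqrt r)^2 and use 1 <= M / (sqrt r(h) sqrt r(p)); with
   q = h + l, the vectors p - q are distinct nonzero lattice vectors, so the sum over p of
   1/sqrt r(p) is bounded by the inner sum of S(alpha/2, sqrt gamma) at q. *)

theory Submission
  imports Defs "HOL-Library.Function_Algebras"
begin

lemma infsum_cmult_right_ennreal:
  "(\<Sum>\<^sub>\<infinity>x\<in>A. c * f x) = c * (\<Sum>\<^sub>\<infinity>x\<in>A. (f x :: ennreal))"
proof -
  have "(\<Sum>\<^sub>\<infinity>x\<in>A. c * f x) = (SUP F\<in>{F. finite F \<and> F \<subseteq> A}. c * sum f F)"
    by (subst nonneg_infsum_complete) (simp_all add: sum_distrib_left)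
  also have "\<dots> = c * (\<Sum>\<^sub>\<infinity>x\<in>A. f x)"
    by (subst nonneg_infsum_complete) (simp_all add: SUP_mult_left_ennreal)
  finally show ?thesis .
qed

lemma infsum_sum_ennreal:
  assumes "finite P"
  shows "(\<Sum>\<^sub>\<infinity>x\<in>A. \<Sum>p\<in>P. g p x) = (\<Sum>p\<in>P. \<Sum>\<^sub>\<infinity>x\<in>A. (g p x :: ennreal))"
  using assms
proof (induction P rule: finite_induct)
  case (insert q P)
  then show ?case
    by (simp add: infsum_add nonneg_summable_on_complete)
qed simp

lemma sum_le_infsum_ennreal:
  assumes "finite B" "B \<subseteq> A"
  shows "sum f B \<le> (\<Sum>\<^sub>\<infinity>x\<in>A. (f x :: ennreal))"
  using infsum_mono_neutral[of f B f A] assms by (auto simp: nonneg_summable_on_complete)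

text \<open>\<open>S\<close> and \<open>\<Sigma>\<^sub>T\<close> over an arbitrary abelian group, with \<open>L\<close> in the role of the dual lattice.\<close>

definition lattice_pair_sum :: "'a::ab_group_add set \<Rightarrow> 'a set \<Rightarrow> ('a \<Rightarrow> ennreal) \<Rightarrow> ennreal" where
  "lattice_pair_sum U L f = (\<Sum>\<^sub>\<infinity>h\<in>U. f h * (\<Sum>\<^sub>\<infinity>l\<in>L - {0}. f (h + l)))"

definition lattice_triple_sum :: "'a::ab_group_add set \<Rightarrow> 'a set \<Rightarrow> ('a \<Rightarrow> ennreal) \<Rightarrow> ennreal" where
  "lattice_triple_sum A L f =
     (\<Sum>h\<in>A. \<Sum>p\<in>{p \<in> A. p - h \<in> L}. \<Sum>\<^sub>\<infinity>l\<in>L - {0, p - h}. f (h + l))"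

lemma lattice_triple_sum_le_card_mult:
  fixes L :: "'a::ab_group_add set"
  assumes "finite A" "A \<subseteq> U" and large: "\<And>h. h \<in> A \<Longrightarrow> 1 \<le> M * f h"
  shows "lattice_triple_sum A L f \<le> M * of_nat (card A) * lattice_pair_sum U L f"
proof -
  define X where "X h = (\<Sum>\<^sub>\<infinity>l\<in>L - {0}. f (h + l))" for h
  have per_point: "(\<Sum>p\<in>{p \<in> A. p - h \<in> L}. \<Sum>\<^sub>\<infinity>l\<in>L - {0, p - h}. f (h + l))
      \<le> of_nat (card A) * (M * f h * X h)" if "h \<in> A" for h
  proof -
    have "(\<Sum>p\<in>{p \<in> A. p - h \<in> L}. \<Sum>\<^sub>\<infinity>l\<in>L - {0, p - h}. f (h + l))
        \<le> (\<Sum>p\<in>{p \<in> A. p - h \<in> L}. X h)"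
      unfolding X_def
      by (intro sum_mono infsum_mono_neutral) (auto simp: nonneg_summable_on_complete)
    also have "\<dots> \<le> of_nat (card A) * X h"
      using \<open>finite A\<close> by (auto intro!: mult_right_mono card_mono)
    also have "\<dots> \<le> of_nat (card A) * (M * f h * X h)"
      using mult_right_mono[OF large[OF that], of "X h"] by (intro mult_left_mono) auto
    finally show ?thesis .
  qed
  have "lattice_triple_sum A L f \<le> (\<Sum>h\<in>A. of_nat (card A) * (M * f h * X h))"
    unfolding lattice_triple_sum_def by (rule sum_mono) (rule per_point)
  also have "\<dots> = M * of_nat (card A) * (\<Sum>h\<in>A. f h * X h)"
    by (simp add: sum_distrib_left mult_ac)
  also have "\<dots> \<le> M * of_nat (card A) * lattice_pair_sum U L f"
    unfolding lattice_pair_sum_def X_def using assms(1,2)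
    by (intro mult_left_mono sum_le_infsum_ennreal) auto
  finally show ?thesis .
qed

lemma sum_coset_le_infsum_shifts:
  fixes L :: "'a::ab_group_add set"
  assumes "finite A" and L_diff: "\<And>l m. l \<in> L \<Longrightarrow> m \<in> L \<Longrightarrow> l - m \<in> L" and "q - h \<in> L"
  shows "(\<Sum>p\<in>{p \<in> A. p - h \<in> L} - {q}. g p) \<le> (\<Sum>\<^sub>\<infinity>m\<in>L - {0}. (g (q + m) :: ennreal))"
proof -
  have "(\<Sum>p\<in>{p \<in> A. p - h \<in> L} - {q}. g p)
      = (\<Sum>m\<in>(\<lambda>p. p - q) ` ({p \<in> A. p - h \<in> L} - {q}). g (q + m))"
    by (subst sum.reindex) (auto simp: inj_on_def algebra_simps)
  also have "\<dots> \<le> (\<Sum>\<^sub>\<infinity>m\<in>L - {0}. g (q + m))"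
  proof (rule sum_le_infsum_ennreal)
    have "p - q \<in> L" if "p - h \<in> L" for p
      using L_diff[OF that \<open>q - h \<in> L\<close>] by simp
    then show "(\<lambda>p. p - q) ` ({p \<in> A. p - h \<in> L} - {q}) \<subseteq> L - {0}"
      by auto
  qed (use \<open>finite A\<close> in simp)
  finally show ?thesis .
qed

lemma coset_triple_sum_le_interchanged:
  fixes L :: "'a::ab_group_add set" and g :: "'a \<Rightarrow> ennreal"
  assumes "finite A" and large: "\<And>h p. h \<in> A \<Longrightarrow> p \<in> A \<Longrightarrow> 1 \<le> M * g h * g p" and "h \<in> A"
  defines "P \<equiv> {p \<in> A. p - h \<in> L}"
  shows "(\<Sum>p\<in>P. \<Sum>\<^sub>\<infinity>l\<in>L - {0, p - h}. g (h + l) * g (h + l))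
    \<le> M * g h * (\<Sum>\<^sub>\<infinity>l\<in>L - {0}. (\<Sum>p\<in>P - {h + l}. g p) * (g (h + l) * g (h + l)))"
proof -
  define F where "F p l = (if p = h + l then 0 else g p * (g (h + l) * g (h + l)))" for p l
  have row: "(\<Sum>p\<in>P. F p l) = (\<Sum>p\<in>P - {h + l}. g p) * (g (h + l) * g (h + l))" for l
  proof -
    have "(\<Sum>p\<in>P. F p l) = (\<Sum>p\<in>P - {h + l}. F p l)"
      using \<open>finite A\<close> by (intro sum.mono_neutral_right) (auto simp: P_def F_def)
    also have "\<dots> = (\<Sum>p\<in>P - {h + l}. g p) * (g (h + l) * g (h + l))"
      by (auto simp: F_def sum_distrib_right intro!: sum.cong)
    finally show ?thesis .
  qed
  have "(\<Sum>p\<in>P. \<Sum>\<^sub>\<infinity>l\<in>L - {0, p - h}. g (h + l) * g (h + l))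
      \<le> (\<Sum>p\<in>P. \<Sum>\<^sub>\<infinity>l\<in>L - {0}. M * g h * F p l)"
  proof (intro sum_mono infsum_mono_neutral)
    fix p l assume "p \<in> P" "l \<in> (L - {0, p - h}) \<inter> (L - {0})"
    then have "h + l \<noteq> p"
      by (auto simp: algebra_simps)
    moreover have "1 \<le> M * g h * g p"
      using large \<open>h \<in> A\<close> \<open>p \<in> P\<close> by (simp add: P_def)
    ultimately show "g (h + l) * g (h + l) \<le> M * g h * F p l"
      using mult_right_mono[of 1 "M * g h * g p" "g (h + l) * g (h + l)"]
      by (simp add: F_def mult_ac)
  qed (auto simp: nonneg_summable_on_complete)
  also have "\<dots> = M * g h * (\<Sum>\<^sub>\<infinity>l\<in>L - {0}. \<Sum>p\<in>P. F p l)"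
    using \<open>finite A\<close>
    by (simp add: P_def infsum_cmult_right_ennreal infsum_sum_ennreal sum_distrib_left)
  also have "\<dots> = M * g h * (\<Sum>\<^sub>\<infinity>l\<in>L - {0}. (\<Sum>p\<in>P - {h + l}. g p) * (g (h + l) * g (h + l)))"
    by (simp only: row)
  finally show ?thesis .
qed

lemma coset_triple_sum_le_square:
  fixes L U :: "'a::ab_group_add set"
  assumes "finite A" "A \<subseteq> U"
    and U_add: "\<And>u l. u \<in> U \<Longrightarrow> l \<in> L \<Longrightarrow> u + l \<in> U"
    and L_diff: "\<And>l m. l \<in> L \<Longrightarrow> m \<in> L \<Longrightarrow> l - m \<in> L"
    and large: "\<And>h p. h \<in> A \<Longrightarrow> p \<in> A \<Longrightarrow> 1 \<le> M * g h * g p"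
    and "h \<in> A"
  shows "(\<Sum>p\<in>{p \<in> A. p - h \<in> L}. \<Sum>\<^sub>\<infinity>l\<in>L - {0, p - h}. g (h + l) * g (h + l))
    \<le> M * lattice_pair_sum U L g * (g h * (\<Sum>\<^sub>\<infinity>l\<in>L - {0}. g (h + l)))"
proof -
  define P where "P = {p \<in> A. p - h \<in> L}"
  define S where "S = lattice_pair_sum U L g"
  have term_le_pair_sum: "g u * (\<Sum>\<^sub>\<infinity>m\<in>L - {0}. g (u + m)) \<le> S" if "u \<in> U" for u
    unfolding S_def lattice_pair_sum_def
    using sum_le_infsum_ennreal[of "{u}" U "\<lambda>u. g u * (\<Sum>\<^sub>\<infinity>m\<in>L - {0}. g (u + m))"] that
    by simp
  have "(\<Sum>p\<in>P. \<Sum>\<^sub>\<infinity>l\<in>L - {0, p - h}. g (h + l) * g (h + l))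
      \<le> M * g h * (\<Sum>\<^sub>\<infinity>l\<in>L - {0}. (\<Sum>p\<in>P - {h + l}. g p) * (g (h + l) * g (h + l)))"
    unfolding P_def using \<open>finite A\<close> large \<open>h \<in> A\<close> by (rule coset_triple_sum_le_interchanged)
  also have "\<dots> \<le> M * g h * (\<Sum>\<^sub>\<infinity>l\<in>L - {0}. S * g (h + l))"
  proof (intro mult_left_mono infsum_mono)
    fix l assume "l \<in> L - {0}"
    have "(\<Sum>p\<in>P - {h + l}. g p) * (g (h + l) * g (h + l))
        \<le> g (h + l) * (\<Sum>\<^sub>\<infinity>m\<in>L - {0}. g (h + l + m)) * g (h + l)"
      using sum_coset_le_infsum_shifts[OF \<open>finite A\<close> L_diff, of "h + l" h g] \<open>l \<in> L - {0}\<close>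
      by (auto simp: P_def mult_ac intro!: mult_left_mono)
    also have "\<dots> \<le> S * g (h + l)"
      using term_le_pair_sum U_add \<open>h \<in> A\<close> \<open>A \<subseteq> U\<close> \<open>l \<in> L - {0}\<close>
      by (intro mult_right_mono) auto
    finally show "(\<Sum>p\<in>P - {h + l}. g p) * (g (h + l) * g (h + l)) \<le> S * g (h + l)" .
  qed (auto simp: nonneg_summable_on_complete)
  finally show ?thesis
    by (simp add: P_def S_def infsum_cmult_right_ennreal mult_ac)
qed

lemma lattice_triple_sum_le_square:
  fixes L U :: "'a::ab_group_add set"
  assumes "finite A" "A \<subseteq> U"
    and "\<And>u l. u \<in> U \<Longrightarrow> l \<in> L \<Longrightarrow> u + l \<in> U"
    and "\<And>l m. l \<in> L \<Longrightarrow> m \<in> L \<Longrightarrow> l - m \<in> L"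
    and "\<And>h p. h \<in> A \<Longrightarrow> p \<in> A \<Longrightarrow> 1 \<le> M * g h * g p"
    and f_square: "\<And>x. f x = g x * g x"
  shows "lattice_triple_sum A L f \<le> M * (lattice_pair_sum U L g)\<^sup>2"
proof -
  define S where "S = lattice_pair_sum U L g"
  have "lattice_triple_sum A L f
      \<le> (\<Sum>h\<in>A. M * S * (g h * (\<Sum>\<^sub>\<infinity>l\<in>L - {0}. g (h + l))))"
    unfolding lattice_triple_sum_def S_def f_square
    by (intro sum_mono coset_triple_sum_le_square[OF assms(1-5)])
  also have "\<dots> = M * S * (\<Sum>h\<in>A. g h * (\<Sum>\<^sub>\<infinity>l\<in>L - {0}. g (h + l)))"
    by (simp add: sum_distrib_left)
  also have "\<dots> \<le> M * S * S"
    unfolding S_def lattice_pair_sum_def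
    by (intro mult_left_mono sum_le_infsum_ennreal) (use assms in auto)
  finally show ?thesis
    by (simp add: S_def power2_eq_square mult_ac)
qed

lemma vadd_eq_plus: "vadd = (+)"
  by (simp add: fun_eq_iff vadd_def)

lemma vsub_eq_minus: "vsub = (-)"
  by (simp add: fun_eq_iff vsub_def)

lemma vzero_eq_zero: "vzero = 0"
  by (simp add: fun_eq_iff vzero_def)

lemma Zd_add: "h \<in> Zd d \<Longrightarrow> l \<in> Zd d \<Longrightarrow> h + l \<in> Zd d"
  by (simp add: Zd_def)

lemma Zd_diff: "h \<in> Zd d \<Longrightarrow> l \<in> Zd d \<Longrightarrow> h - l \<in> Zd d"
  by (simp add: Zd_def)

lemma finite_supp_Zd: "h \<in> Zd d \<Longrightarrow> finite (supp h)"
  unfolding Zd_def supp_def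
  by (rule finite_subset[of _ "{..<d}"]) (auto simp: not_less[symmetric])

lemma dotp_diff: "dotp d (p - q) z = dotp d p z - dotp d q z"
  by (simp add: dotp_def left_diff_distrib sum_subtractf)

lemma dual_lattice_subset_Zd: "dual_lattice n d z \<subseteq> Zd d"
  by (auto simp: dual_lattice_def)

lemma dual_lattice_diff:
  "l \<in> dual_lattice n d z \<Longrightarrow> m \<in> dual_lattice n d z \<Longrightarrow> l - m \<in> dual_lattice n d z"
  by (auto simp: dual_lattice_def Zd_diff dotp_diff cong_0_iff)

lemma Ssum_eq_lattice_pair_sum:
  "Ssum n d a \<beta> z = lattice_pair_sum (Zd d) (dual_lattice n d z) (\<lambda>h. ennreal (1 / rr a \<beta> h))"
  by (simp add: Ssum_def lattice_pair_sum_def vadd_eq_plus vzero_eq_zero)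

lemma SigmaT_eq_lattice_triple_sum:
  "SigmaT n d \<alpha> \<gamma> M z =
     lattice_triple_sum (Ad d \<alpha> \<gamma> M) (dual_lattice n d z) (\<lambda>h. ennreal (1 / rr \<alpha> \<gamma> h))"
proof -
  have "{p \<in> Ad d \<alpha> \<gamma> M. [dotp d (vsub p h) z = 0] (mod int n)}
      = {p \<in> Ad d \<alpha> \<gamma> M. p - h \<in> dual_lattice n d z}" if "h \<in> Ad d \<alpha> \<gamma> M" for h
    using that by (auto simp: dual_lattice_def Ad_def vsub_eq_minus Zd_diff)
  then show ?thesis
    unfolding SigmaT_def lattice_triple_sum_def
    by (intro sum.cong refl) (simp_all add: vadd_eq_plus vsub_eq_minus vzero_eq_zero)
qed

lemma rr_pos:
  assumes "h \<in> Zd d" "\<And>u. finite u \<Longrightarrow> \<gamma> u > 0"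
  shows "rr a \<gamma> h > 0"
proof -
  have "(\<Prod>j\<in>supp h. \<bar>real_of_int (h j)\<bar> powr a) > 0"
    by (rule prod_pos) (auto simp: supp_def)
  then show ?thesis
    using assms finite_supp_Zd by (simp add: rr_def)
qed

lemma real_sqrt_prod: "sqrt (\<Prod>j\<in>S. f j) = (\<Prod>j\<in>S. sqrt (f j))"
  by (induction S rule: infinite_finite_induct) (auto simp: real_sqrt_mult)

lemma rr_sqrt_weights: "rr (a / 2) (\<lambda>u. sqrt (\<gamma> u)) h = sqrt (rr a \<gamma> h)"
  by (simp add: rr_def real_sqrt_divide real_sqrt_prod powr_half_sqrt_powr)

text \<open>No sign hypothesis: for \<open>x \<le> 0\<close> both sides are \<open>0\<close>, since \<open>ennreal\<close> truncates negative reals.\<close>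

lemma ennreal_one_div_eq_sqrt_square:
  "ennreal (1 / x) = ennreal (1 / sqrt x) * ennreal (1 / sqrt x)"
proof (cases "x > 0")
  case True
  then have "1 / x = 1 / sqrt x * (1 / sqrt x)"
    by (simp add: field_simps)
  then show ?thesis
    using True by (simp add: ennreal_mult[symmetric])
qed (simp add: ennreal_neg)

lemma one_le_ennreal_mult_one_div:
  assumes "0 < x" "x \<le> M"
  shows "1 \<le> ennreal M * ennreal (1 / x)"
proof -
  have "1 \<le> M * (1 / x)"
    using assms by (simp add: field_simps)
  then show ?thesis
    using assms by (simp add: ennreal_mult[symmetric] ennreal_leI flip: ennreal_1)
qed

lemma Ad_subset_Zd: "Ad d \<alpha> \<gamma> M \<subseteq> Zd d"
  by (auto simp: Ad_def)

lemma rr_bounds_Ad: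
  assumes "h \<in> Ad d \<alpha> \<gamma> M" "\<And>u. finite u \<Longrightarrow> \<gamma> u > 0"
  shows "0 < rr \<alpha> \<gamma> h" "rr \<alpha> \<gamma> h \<le> M"
  using assms rr_pos Ad_subset_Zd by (auto simp: Ad_def)

lemma one_le_mult_rr_weight:
  assumes "h \<in> Ad d \<alpha> \<gamma> M" "\<And>u. finite u \<Longrightarrow> \<gamma> u > 0"
  shows "1 \<le> ennreal M * ennreal (1 / rr \<alpha> \<gamma> h)"
  using one_le_ennreal_mult_one_div rr_bounds_Ad[OF assms] by blast

lemma one_le_mult_sqrt_rr_weights:
  assumes "h \<in> Ad d \<alpha> \<gamma> M" "p \<in> Ad d \<alpha> \<gamma> M" "\<And>u. finite u \<Longrightarrow> \<gamma> u > 0"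
  shows "1 \<le> ennreal M * ennreal (1 / rr (\<alpha> / 2) (\<lambda>u. sqrt (\<gamma> u)) h)
                         * ennreal (1 / rr (\<alpha> / 2) (\<lambda>u. sqrt (\<gamma> u)) p)"
proof -
  note h_bounds = rr_bounds_Ad[OF assms(1,3)] and p_bounds = rr_bounds_Ad[OF assms(2,3)]
  have "sqrt (rr \<alpha> \<gamma> h) * sqrt (rr \<alpha> \<gamma> p) \<le> sqrt M * sqrt M"
    using h_bounds p_bounds by (intro mult_mono) auto
  then have "1 \<le> ennreal M * ennreal (1 / (sqrt (rr \<alpha> \<gamma> h) * sqrt (rr \<alpha> \<gamma> p)))"
    using h_bounds p_bounds by (intro one_le_ennreal_mult_one_div) auto
  also have "ennreal (1 / (sqrt (rr \<alpha> \<gamma> h) * sqrt (rr \<alpha> \<gamma> p)))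
      = ennreal (1 / sqrt (rr \<alpha> \<gamma> h)) * ennreal (1 / sqrt (rr \<alpha> \<gamma> p))"
    using h_bounds(1) p_bounds(1) by (subst ennreal_mult[symmetric]) auto
  finally show ?thesis
    by (simp add: rr_sqrt_weights mult.assoc)
qed

lemma ennreal_one_div_rr_eq_square:
  "ennreal (1 / rr a \<gamma> h)
     = ennreal (1 / rr (a / 2) (\<lambda>u. sqrt (\<gamma> u)) h) * ennreal (1 / rr (a / 2) (\<lambda>u. sqrt (\<gamma> u)) h)"
  unfolding rr_sqrt_weights by (rule ennreal_one_div_eq_sqrt_square)

lemma Zd_add_dual_lattice: "u \<in> Zd d \<Longrightarrow> l \<in> dual_lattice n d z \<Longrightarrow> u + l \<in> Zd d"
  using dual_lattice_subset_Zd Zd_add by blast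

theorem lemma7:
  fixes n d :: nat and \<alpha> M :: real and \<gamma> :: "nat set \<Rightarrow> real" and z :: "nat \<Rightarrow> int"
  assumes "n \<ge> 2" and "d \<ge> 1" and "\<alpha> > 1" and "M > 0"
    and "\<And>u. finite u \<Longrightarrow> \<gamma> u > 0" and "\<gamma> {} = 1"
    and "z \<in> Zd d"
  shows "SigmaT n d \<alpha> \<gamma> M z \<le> ennreal M * of_nat (card (Ad d \<alpha> \<gamma> M)) * Ssum n d \<alpha> \<gamma> z
    \<and> (\<alpha> > 2 \<longrightarrow> SigmaT n d \<alpha> \<gamma> M z \<le> ennreal M * (Ssum n d (\<alpha>/2) (\<lambda>u. sqrt (\<gamma> u)) z)\<^sup>2)"
proof (cases "finite (Ad d \<alpha> \<gamma> M)")
  case False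
  then show ?thesis
    by (simp add: SigmaT_eq_lattice_triple_sum lattice_triple_sum_def)
next
  case True
  have "SigmaT n d \<alpha> \<gamma> M z \<le> ennreal M * of_nat (card (Ad d \<alpha> \<gamma> M)) * Ssum n d \<alpha> \<gamma> z"
    unfolding SigmaT_eq_lattice_triple_sum Ssum_eq_lattice_pair_sum
    by (intro lattice_triple_sum_le_card_mult True Ad_subset_Zd one_le_mult_rr_weight assms(5))
  moreover
  txt \<open>The hypothesis \<open>\<alpha> > 2\<close> only makes the right-hand side finite; the bound holds in \<open>ennreal\<close> without it.\<close>
  have "SigmaT n d \<alpha> \<gamma> M z \<le> ennreal M * (Ssum n d (\<alpha>/2) (\<lambda>u. sqrt (\<gamma> u)) z)\<^sup>2"
    unfolding SigmaT_eq_lattice_triple_sum Ssum_eq_lattice_pair_sum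
    by (intro lattice_triple_sum_le_square True Ad_subset_Zd Zd_add_dual_lattice dual_lattice_diff
        one_le_mult_sqrt_rr_weights assms(5) ennreal_one_div_rr_eq_square)
  ultimately show ?thesis
    by simp
qed

end
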